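(* The space $C([a,b],\mathbb{R}_\mathcal{I})$ of continuous interval-valued functions on $[a,b]$, with pointwise operations and the norm $\|\bar f\|_\infty=\max_{x\in[a,b]}\|\bar f(x)\|$, is a Banach space.
   Context: An interval number is a closed interval $\bar a=[a_l,a_r]$ with $a_l<a_r$ real; $\mathbb{R}_\mathcal{I}$ is the set of interval numbers. Write $a_c=(a_l+a_r)/2$, $a_w=(a_r-a_l)/2>0$, $\bar a=\langle a_c;a_w\rangle=[a_c-a_w,a_c+a_w]$. Operations: $\bar a+\bar b=\langle a_c+b_c;a_wb_w\rangle$, $k\bar a=\langle ka_c;a_w^k\rangle$, $\bar a-\bar b=\langle a_c-b_c;a_w/b_w\rangle$; norm $\|\bar a\|=\sqrt{a_c^2+\ln^2a_w}$; distance $d(\bar a,\bar b)=\|\bar a-\bar b\|$. Continuity of $\bar f:[a,b]\to\mathbb{R}_\mathcal{I}$ is with respect to $d$. Pointwise operations: $(\bar f+\bar g)(x)=\bar f(x)+\bar g(x)$, $(k\bar f)(x)=k\bar f(x)$. *)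

theory Defs
  imports "HOL-Analysis.Analysis"
begin

text \<open>An interval number [l,r] with l < r is represented as the pair (l, r).\<close>
type_synonym interval = "real \<times> real"

definition ivl_nums :: "interval set" where
  "ivl_nums = {(l, r). l < r}"

definition ic :: "interval \<Rightarrow> real" where
  "ic a = (fst a + snd a) / 2"

definition iw :: "interval \<Rightarrow> real" where
  "iw a = (snd a - fst a) / 2"

definition mk_ivl :: "real \<Rightarrow> real \<Rightarrow> interval" where
  "mk_ivl c w = (c - w, c + w)"

definition iadd :: "interval \<Rightarrow> interval \<Rightarrow> interval" where
  "iadd a b = mk_ivl (ic a + ic b) (iw a * iw b)"

definition iscale :: "real \<Rightarrow> interval \<Rightarrow> interval" where
  "iscale k a = mk_ivl (k * ic a) (iw a powr k)"

definition isub :: "interval \<Rightarrow> interval \<Rightarrow> interval" where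
  "isub a b = mk_ivl (ic a - ic b) (iw a / iw b)"

definition inorm :: "interval \<Rightarrow> real" where
  "inorm a = sqrt ((ic a)\<^sup>2 + (ln (iw a))\<^sup>2)"

definition idist :: "interval \<Rightarrow> interval \<Rightarrow> real" where
  "idist a b = inorm (isub a b)"

text \<open>The interval number <0;1> = [-1,1], the zero of the vector space.\<close>
definition izero :: interval where
  "izero = mk_ivl 0 1"

definition icontinuous_on :: "real set \<Rightarrow> (real \<Rightarrow> interval) \<Rightarrow> bool" where
  "icontinuous_on S f \<longleftrightarrow>
     (\<forall>x\<in>S. \<forall>e>0. \<exists>\<delta>>0. \<forall>y\<in>S. \<bar>y - x\<bar> < \<delta> \<longrightarrow> idist (f y) (f x) < e)"

text \<open>C([a,b], R_I): functions [a,b] -> R_I, represented extensionally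
  (fixed to the value izero outside [a,b]) so that function equality is equality
  of elements of the space.\<close>
definition Cfun :: "real \<Rightarrow> real \<Rightarrow> (real \<Rightarrow> interval) set" where
  "Cfun a b = {f. (\<forall>x\<in>{a..b}. f x \<in> ivl_nums) \<and> (\<forall>x. x \<notin> {a..b} \<longrightarrow> f x = izero)
                  \<and> icontinuous_on {a..b} f}"

definition fadd :: "(real \<Rightarrow> interval) \<Rightarrow> (real \<Rightarrow> interval) \<Rightarrow> (real \<Rightarrow> interval)" where
  "fadd f g = (\<lambda>x. iadd (f x) (g x))"

definition fscale :: "real \<Rightarrow> (real \<Rightarrow> interval) \<Rightarrow> (real \<Rightarrow> interval)" where
  "fscale k f = (\<lambda>x. iscale k (f x))"

definition fzero :: "real \<Rightarrow> interval" where
  "fzero = (\<lambda>x. izero)"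

text \<open>Sup norm; for continuous f on [a,b] (a < b) this supremum is the maximum.\<close>
definition supnorm :: "real \<Rightarrow> real \<Rightarrow> (real \<Rightarrow> interval) \<Rightarrow> real" where
  "supnorm a b f = (SUP x\<in>{a..b}. inorm (f x))"

end

theory Submission
  imports Defs
begin

text \<open>The map \<open>\<langle>c;w\<rangle> \<mapsto> c + i ln w\<close> is a bijection from the interval numbers onto \<open>\<complex>\<close>
  that turns the interval operations into the real vector space operations of \<open>\<complex>\<close> and the
  norm \<open>\<parallel>\<cdot>\<parallel>\<close> into the modulus. Transporting along it pointwise identifies
  \<open>C([a,b],\<real>\<^sub>\<I>)\<close> with \<open>C([a,b],\<complex>)\<close> under the sup norm, which is complete because a
  uniformly Cauchy sequence of continuous functions into a Banach space converges
  uniformly to a continuous limit.\<close>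

subsection \<open>Sup norm of continuous functions on a compact set\<close>

definition sup_norm_on :: "'a set \<Rightarrow> ('a \<Rightarrow> 'b::real_normed_vector) \<Rightarrow> real" where
  "sup_norm_on S g = (SUP x\<in>S. norm (g x))"

lemma bdd_above_norm_image_compact:
  fixes g :: "'a::topological_space \<Rightarrow> 'b::real_normed_vector"
  assumes "compact S" and "continuous_on S g"
  shows "bdd_above ((\<lambda>x. norm (g x)) ` S)"
proof -
  have "continuous_on S (\<lambda>x. norm (g x))"
    using assms(2) by (intro continuous_intros)
  then have "compact ((\<lambda>x. norm (g x)) ` S)"
    using assms(1) by (rule compact_continuous_image)
  then show ?thesis
    by (intro bounded_imp_bdd_above compact_imp_bounded)
qed

lemma norm_le_sup_norm_on:
  fixes g :: "'a::topological_space \<Rightarrow> 'b::real_normed_vector"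
  assumes "compact S" "continuous_on S g" "x \<in> S"
  shows "norm (g x) \<le> sup_norm_on S g"
  unfolding sup_norm_on_def
  using assms by (intro cSUP_upper bdd_above_norm_image_compact)

lemma sup_norm_on_le:
  "S \<noteq> {} \<Longrightarrow> (\<And>x. x \<in> S \<Longrightarrow> norm (g x) \<le> c) \<Longrightarrow> sup_norm_on S g \<le> c"
  unfolding sup_norm_on_def by (rule cSUP_least)

lemma sup_norm_on_nonneg:
  fixes g :: "'a::topological_space \<Rightarrow> 'b::real_normed_vector"
  assumes "compact S" "S \<noteq> {}" "continuous_on S g"
  shows "0 \<le> sup_norm_on S g"
proof -
  obtain x where "x \<in> S" using assms(2) by blast
  then show ?thesis
    using norm_le_sup_norm_on[OF assms(1,3)] norm_ge_zero order_trans by blast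
qed

lemma sup_norm_on_eq_0_iff:
  fixes g :: "'a::topological_space \<Rightarrow> 'b::real_normed_vector"
  assumes "compact S" "S \<noteq> {}" "continuous_on S g"
  shows "sup_norm_on S g = 0 \<longleftrightarrow> (\<forall>x\<in>S. g x = 0)"
proof
  assume "sup_norm_on S g = 0"
  then show "\<forall>x\<in>S. g x = 0"
    using norm_le_sup_norm_on[OF assms(1,3)] by (metis norm_le_zero_iff)
next
  assume "\<forall>x\<in>S. g x = 0"
  then show "sup_norm_on S g = 0"
    using sup_norm_on_le[OF assms(2), of g 0] sup_norm_on_nonneg[OF assms] by auto
qed

lemma sup_norm_on_scaleR:
  fixes g :: "'a::topological_space \<Rightarrow> 'b::real_normed_vector"
  assumes S: "compact S" "S \<noteq> {}" and g: "continuous_on S g"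
  shows "sup_norm_on S (\<lambda>x. k *\<^sub>R g x) = \<bar>k\<bar> * sup_norm_on S g"
proof (rule antisym)
  show "sup_norm_on S (\<lambda>x. k *\<^sub>R g x) \<le> \<bar>k\<bar> * sup_norm_on S g"
    using norm_le_sup_norm_on[OF S(1) g]
    by (intro sup_norm_on_le[OF S(2)]) (simp add: mult_left_mono)
  have kg: "continuous_on S (\<lambda>x. k *\<^sub>R g x)"
    using g by (intro continuous_intros)
  show "\<bar>k\<bar> * sup_norm_on S g \<le> sup_norm_on S (\<lambda>x. k *\<^sub>R g x)"
  proof (cases "k = 0")
    case True
    then show ?thesis using sup_norm_on_nonneg[OF S kg] by simp
  next
    case False
    have "sup_norm_on S g \<le> sup_norm_on S (\<lambda>x. k *\<^sub>R g x) / \<bar>k\<bar>"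
      using False norm_le_sup_norm_on[OF S(1) kg]
      by (intro sup_norm_on_le[OF S(2)]) (simp add: field_simps)
    then show ?thesis using False by (simp add: field_simps)
  qed
qed

lemma sup_norm_on_add_le:
  fixes g h :: "'a::topological_space \<Rightarrow> 'b::real_normed_vector"
  assumes S: "compact S" "S \<noteq> {}" and "continuous_on S g" "continuous_on S h"
  shows "sup_norm_on S (\<lambda>x. g x + h x) \<le> sup_norm_on S g + sup_norm_on S h"
proof (rule sup_norm_on_le[OF S(2)])
  fix x assume "x \<in> S"
  then show "norm (g x + h x) \<le> sup_norm_on S g + sup_norm_on S h"
    using assms norm_le_sup_norm_on[of S g x] norm_le_sup_norm_on[of S h x]
      norm_triangle_ineq[of "g x" "h x"] by linarith
qed

lemma sup_norm_on_Cauchy_imp_convergent: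
  fixes G :: "nat \<Rightarrow> 'a::topological_space \<Rightarrow> 'b::banach"
  assumes S: "compact S" "S \<noteq> {}" and cont: "\<And>n. continuous_on S (G n)"
    and Cauchy: "\<forall>e>0. \<exists>M. \<forall>m\<ge>M. \<forall>n\<ge>M. sup_norm_on S (\<lambda>x. G m x - G n x) < e"
  obtains l where "continuous_on S l" and "(\<lambda>n. sup_norm_on S (\<lambda>x. G n x - l x)) \<longlonglongrightarrow> 0"
proof -
  have "uniformly_Cauchy_on S G"
    unfolding uniformly_Cauchy_on_def
  proof (intro allI impI)
    fix e :: real assume "e > 0"
    then obtain M where M: "\<forall>m\<ge>M. \<forall>n\<ge>M. sup_norm_on S (\<lambda>x. G m x - G n x) < e"
      using Cauchy by blast
    have "dist (G m x) (G n x) < e" if "x \<in> S" "M \<le> m" "M \<le> n" for x m n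
      using norm_le_sup_norm_on[OF S(1) _ \<open>x \<in> S\<close>, of "\<lambda>x. G m x - G n x"] cont M that
      by (fastforce simp: dist_norm intro: continuous_intros)
    then show "\<exists>M. \<forall>x\<in>S. \<forall>m\<ge>M. \<forall>n\<ge>M. dist (G m x) (G n x) < e" by blast
  qed
  then obtain l where lim: "uniform_limit S G l sequentially"
    using Cauchy_uniformly_convergent uniformly_convergent_on_def by blast
  have "continuous_on S l"
    using cont by (intro uniform_limit_theorem[OF _ lim]) simp_all
  moreover have "(\<lambda>n. sup_norm_on S (\<lambda>x. G n x - l x)) \<longlonglongrightarrow> 0"
  proof (rule LIMSEQ_I)
    fix r :: real assume "0 < r"
    then have "\<forall>\<^sub>F n in sequentially. \<forall>x\<in>S. dist (G n x) (l x) < r / 2"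
      using lim unfolding uniform_limit_iff by (meson half_gt_zero)
    then obtain N where N: "\<And>n x. N \<le> n \<Longrightarrow> x \<in> S \<Longrightarrow> dist (G n x) (l x) < r / 2"
      unfolding eventually_sequentially by blast
    have "norm (sup_norm_on S (\<lambda>x. G n x - l x) - 0) < r" if "N \<le> n" for n
    proof -
      have "sup_norm_on S (\<lambda>x. G n x - l x) \<le> r / 2"
        using N[OF that] by (intro sup_norm_on_le[OF S(2)]) (simp add: dist_norm less_imp_le)
      moreover have "0 \<le> sup_norm_on S (\<lambda>x. G n x - l x)"
        using cont \<open>continuous_on S l\<close> by (intro sup_norm_on_nonneg[OF S] continuous_intros)
      ultimately show ?thesis using \<open>0 < r\<close> by simp
    qed
    then show "\<exists>N. \<forall>n\<ge>N. norm (sup_norm_on S (\<lambda>x. G n x - l x) - 0) < r" by blast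
  qed
  ultimately show thesis by (rule that)
qed

subsection \<open>Interval numbers as complex numbers\<close>

definition ivl_to_complex :: "interval \<Rightarrow> complex" where
  "ivl_to_complex p = Complex (ic p) (ln (iw p))"

definition complex_to_ivl :: "complex \<Rightarrow> interval" where
  "complex_to_ivl z = mk_ivl (Re z) (exp (Im z))"

lemma ic_mk_ivl [simp]: "ic (mk_ivl c w) = c"
  by (simp add: ic_def mk_ivl_def)

lemma iw_mk_ivl [simp]: "iw (mk_ivl c w) = w"
  by (simp add: iw_def mk_ivl_def)

lemma ivl_nums_iff_iw_pos: "p \<in> ivl_nums \<longleftrightarrow> 0 < iw p"
  by (cases p) (auto simp: ivl_nums_def iw_def)

lemma iw_izero [simp]: "iw izero = 1"
  by (simp add: izero_def)

lemma iw_complex_to_ivl_pos [simp]: "0 < iw (complex_to_ivl z)"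
  by (simp add: complex_to_ivl_def)

lemma ivl_to_complex_inverse [simp]: "ivl_to_complex (complex_to_ivl z) = z"
  by (simp add: complex_to_ivl_def ivl_to_complex_def complex_eq_iff)

lemma complex_to_ivl_inverse: "0 < iw p \<Longrightarrow> complex_to_ivl (ivl_to_complex p) = p"
  by (cases p) (simp add: complex_to_ivl_def ivl_to_complex_def mk_ivl_def ic_def iw_def field_simps)

lemma ivl_to_complex_inject:
  "0 < iw p \<Longrightarrow> 0 < iw q \<Longrightarrow> ivl_to_complex p = ivl_to_complex q \<longleftrightarrow> p = q"
  by (metis complex_to_ivl_inverse)

lemma ivl_to_complex_izero [simp]: "ivl_to_complex izero = 0"
  by (simp add: izero_def ivl_to_complex_def complex_eq_iff)

lemma iw_iadd_pos: "0 < iw p \<Longrightarrow> 0 < iw q \<Longrightarrow> 0 < iw (iadd p q)"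
  by (simp add: iadd_def)

lemma iw_iscale_pos: "0 < iw p \<Longrightarrow> 0 < iw (iscale k p)"
  by (simp add: iscale_def)

lemma ivl_to_complex_iadd:
  "0 < iw p \<Longrightarrow> 0 < iw q \<Longrightarrow> ivl_to_complex (iadd p q) = ivl_to_complex p + ivl_to_complex q"
  by (simp add: iadd_def ivl_to_complex_def complex_eq_iff ln_mult)

lemma ivl_to_complex_iscale:
  "0 < iw p \<Longrightarrow> ivl_to_complex (iscale k p) = k *\<^sub>R ivl_to_complex p"
  by (simp add: iscale_def ivl_to_complex_def complex_eq_iff ln_powr)

lemma inorm_eq_norm_ivl_to_complex: "inorm p = norm (ivl_to_complex p)"
  by (simp add: inorm_def ivl_to_complex_def norm_complex_def)

lemma idist_eq_dist_ivl_to_complex: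
  "0 < iw p \<Longrightarrow> 0 < iw q \<Longrightarrow> idist p q = dist (ivl_to_complex p) (ivl_to_complex q)"
  by (simp add: idist_def inorm_def isub_def ivl_to_complex_def norm_complex_def dist_norm ln_div)

lemmas ivl_to_complex_ops = iw_iadd_pos iw_iscale_pos ivl_to_complex_iadd ivl_to_complex_iscale

lemma iadd_assoc: "iadd (iadd p q) r = iadd p (iadd q r)"
  by (simp add: iadd_def add.assoc mult.assoc)

lemma iadd_commute: "iadd p q = iadd q p"
  by (simp add: iadd_def add.commute mult.commute)

lemma iadd_izero: "iadd p izero = p"
  by (cases p) (simp add: iadd_def izero_def mk_ivl_def ic_def iw_def field_simps)

lemma iadd_iscale_minus_one: "0 < iw p \<Longrightarrow> iadd p (iscale (-1) p) = izero"
  by (subst ivl_to_complex_inject[symmetric]) (simp_all add: ivl_to_complex_ops)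

lemma iscale_iadd:
  "0 < iw p \<Longrightarrow> 0 < iw q \<Longrightarrow> iscale k (iadd p q) = iadd (iscale k p) (iscale k q)"
  by (subst ivl_to_complex_inject[symmetric]) (simp_all add: ivl_to_complex_ops scaleR_add_right)

lemma iscale_add: "0 < iw p \<Longrightarrow> iscale (k + l) p = iadd (iscale k p) (iscale l p)"
  by (subst ivl_to_complex_inject[symmetric]) (simp_all add: ivl_to_complex_ops scaleR_add_left)

lemma iscale_iscale: "0 < iw p \<Longrightarrow> iscale k (iscale l p) = iscale (k * l) p"
  by (subst ivl_to_complex_inject[symmetric]) (simp_all add: ivl_to_complex_ops)

lemma iscale_one: "0 < iw p \<Longrightarrow> iscale 1 p = p"
  by (subst ivl_to_complex_inject[symmetric]) (simp_all add: ivl_to_complex_ops)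

lemma iscale_izero: "iscale k izero = izero"
  by (simp add: iscale_def izero_def)

subsection \<open>The space \<open>C([a,b],\<real>\<^sub>\<I>)\<close>\<close>

lemma in_Cfun_iff:
  "f \<in> Cfun a b \<longleftrightarrow> (\<forall>x. 0 < iw (f x)) \<and> (\<forall>x. x \<notin> {a..b} \<longrightarrow> f x = izero)
     \<and> continuous_on {a..b} (\<lambda>x. ivl_to_complex (f x))"
proof -
  have "icontinuous_on {a..b} f \<longleftrightarrow> continuous_on {a..b} (\<lambda>x. ivl_to_complex (f x))"
    if "\<forall>x. 0 < iw (f x)"
    unfolding icontinuous_on_def continuous_on_iff dist_real_def
    using that by (simp add: idist_eq_dist_ivl_to_complex)
  moreover have "(\<forall>x\<in>{a..b}. f x \<in> ivl_nums) \<and> (\<forall>x. x \<notin> {a..b} \<longrightarrow> f x = izero)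
      \<longleftrightarrow> (\<forall>x. 0 < iw (f x)) \<and> (\<forall>x. x \<notin> {a..b} \<longrightarrow> f x = izero)"
    unfolding ivl_nums_iff_iw_pos by (metis iw_izero zero_less_one)
  ultimately show ?thesis
    unfolding Cfun_def by blast
qed

lemma Cfun_iw_pos: "f \<in> Cfun a b \<Longrightarrow> 0 < iw (f x)"
  by (simp add: in_Cfun_iff)

lemma Cfun_outside: "f \<in> Cfun a b \<Longrightarrow> x \<notin> {a..b} \<Longrightarrow> f x = izero"
  by (simp add: in_Cfun_iff)

lemma Cfun_continuous_on: "f \<in> Cfun a b \<Longrightarrow> continuous_on {a..b} (\<lambda>x. ivl_to_complex (f x))"
  by (simp add: in_Cfun_iff)

lemma fadd_in_Cfun:
  assumes f: "f \<in> Cfun a b" and g: "g \<in> Cfun a b"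
  shows "fadd f g \<in> Cfun a b"
proof -
  have "continuous_on {a..b} (\<lambda>x. ivl_to_complex (f x) + ivl_to_complex (g x))"
    using f g by (intro continuous_intros Cfun_continuous_on)
  then show ?thesis
    using Cfun_iw_pos[OF f] Cfun_iw_pos[OF g] Cfun_outside[OF f] Cfun_outside[OF g]
    by (simp add: in_Cfun_iff fadd_def ivl_to_complex_ops iadd_izero)
qed

lemma fscale_in_Cfun:
  assumes f: "f \<in> Cfun a b"
  shows "fscale k f \<in> Cfun a b"
proof -
  have "continuous_on {a..b} (\<lambda>x. k *\<^sub>R ivl_to_complex (f x))"
    using f by (intro continuous_intros Cfun_continuous_on)
  then show ?thesis
    using Cfun_iw_pos[OF f] Cfun_outside[OF f]
    by (simp add: in_Cfun_iff fscale_def ivl_to_complex_ops iscale_izero)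
qed

lemma fzero_in_Cfun: "fzero \<in> Cfun a b"
  by (simp add: in_Cfun_iff fzero_def)

lemma fadd_assoc: "fadd (fadd f g) h = fadd f (fadd g h)"
  by (simp add: fadd_def iadd_assoc)

lemma fadd_commute: "fadd f g = fadd g f"
  by (simp add: fadd_def iadd_commute)

lemma fadd_fzero: "fadd f fzero = f"
  by (simp add: fadd_def fzero_def iadd_izero)

lemma fadd_fscale_minus_one: "f \<in> Cfun a b \<Longrightarrow> fadd f (fscale (-1) f) = fzero"
  by (simp add: fadd_def fscale_def fzero_def iadd_iscale_minus_one Cfun_iw_pos)

lemma fscale_fadd:
  "f \<in> Cfun a b \<Longrightarrow> g \<in> Cfun a b \<Longrightarrow> fscale k (fadd f g) = fadd (fscale k f) (fscale k g)"
  by (simp add: fadd_def fscale_def iscale_iadd Cfun_iw_pos)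

lemma fscale_add: "f \<in> Cfun a b \<Longrightarrow> fscale (k + l) f = fadd (fscale k f) (fscale l f)"
  by (simp add: fadd_def fscale_def iscale_add Cfun_iw_pos)

lemma fscale_fscale: "f \<in> Cfun a b \<Longrightarrow> fscale k (fscale l f) = fscale (k * l) f"
  by (simp add: fscale_def iscale_iscale Cfun_iw_pos)

lemma fscale_one: "f \<in> Cfun a b \<Longrightarrow> fscale 1 f = f"
  by (simp add: fscale_def iscale_one Cfun_iw_pos)

lemma supnorm_eq_sup_norm_on: "supnorm a b f = sup_norm_on {a..b} (\<lambda>x. ivl_to_complex (f x))"
  by (simp add: supnorm_def sup_norm_on_def inorm_eq_norm_ivl_to_complex)

lemma supnorm_nonneg: "a \<le> b \<Longrightarrow> f \<in> Cfun a b \<Longrightarrow> 0 \<le> supnorm a b f"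
  by (simp add: supnorm_eq_sup_norm_on sup_norm_on_nonneg Cfun_continuous_on)

lemma supnorm_eq_0_iff: "a \<le> b \<Longrightarrow> f \<in> Cfun a b \<Longrightarrow> supnorm a b f = 0 \<longleftrightarrow> f = fzero"
  unfolding supnorm_eq_sup_norm_on
  by (auto simp: sup_norm_on_eq_0_iff Cfun_continuous_on fzero_def fun_eq_iff
      ivl_to_complex_inject[symmetric] Cfun_iw_pos Cfun_outside)

lemma supnorm_fscale: "a \<le> b \<Longrightarrow> f \<in> Cfun a b \<Longrightarrow> supnorm a b (fscale k f) = \<bar>k\<bar> * supnorm a b f"
  by (simp add: supnorm_eq_sup_norm_on fscale_def ivl_to_complex_iscale Cfun_iw_pos
      sup_norm_on_scaleR Cfun_continuous_on)

lemma supnorm_fadd_le: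
  "a \<le> b \<Longrightarrow> f \<in> Cfun a b \<Longrightarrow> g \<in> Cfun a b \<Longrightarrow>
   supnorm a b (fadd f g) \<le> supnorm a b f + supnorm a b g"
  by (simp add: supnorm_eq_sup_norm_on fadd_def ivl_to_complex_iadd Cfun_iw_pos
      sup_norm_on_add_le Cfun_continuous_on)

lemma supnorm_diff:
  "f \<in> Cfun a b \<Longrightarrow> g \<in> Cfun a b \<Longrightarrow>
   supnorm a b (fadd f (fscale (-1) g))
     = sup_norm_on {a..b} (\<lambda>x. ivl_to_complex (f x) - ivl_to_complex (g x))"
  by (simp add: supnorm_eq_sup_norm_on fadd_def fscale_def ivl_to_complex_ops Cfun_iw_pos)

lemma Cfun_complete:
  assumes "a \<le> b" and F: "\<forall>n. F n \<in> Cfun a b"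
    and Cauchy: "\<forall>e>0. \<exists>M. \<forall>m\<ge>M. \<forall>n\<ge>M. supnorm a b (fadd (F m) (fscale (-1) (F n))) < e"
  shows "\<exists>f\<in>Cfun a b. (\<lambda>n. supnorm a b (fadd (F n) (fscale (-1) f))) \<longlonglongrightarrow> 0"
proof -
  from F have Fn: "\<And>n. F n \<in> Cfun a b" by blast
  define G where "G n x = ivl_to_complex (F n x)" for n x
  obtain l where l: "continuous_on {a..b} l"
    and lim: "(\<lambda>n. sup_norm_on {a..b} (\<lambda>x. G n x - l x)) \<longlonglongrightarrow> 0"
  proof (rule sup_norm_on_Cauchy_imp_convergent)
    show "compact {a..b}" "{a..b} \<noteq> {}" using \<open>a \<le> b\<close> by simp_all
    show "continuous_on {a..b} (G n)" for n
      unfolding G_def by (rule Cfun_continuous_on[OF Fn])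
    show "\<forall>e>0. \<exists>M. \<forall>m\<ge>M. \<forall>n\<ge>M. sup_norm_on {a..b} (\<lambda>x. G m x - G n x) < e"
      using Cauchy by (simp add: G_def supnorm_diff[OF Fn Fn])
  qed
  define f where "f x = (if x \<in> {a..b} then complex_to_ivl (l x) else izero)" for x
  have "continuous_on {a..b} (\<lambda>x. ivl_to_complex (f x))"
    using l by (rule continuous_on_eq) (simp add: f_def)
  then have f: "f \<in> Cfun a b"
    by (simp add: in_Cfun_iff f_def)
  have "sup_norm_on {a..b} (\<lambda>x. G n x - l x)
      = sup_norm_on {a..b} (\<lambda>x. ivl_to_complex (F n x) - ivl_to_complex (f x))" for n
    unfolding sup_norm_on_def G_def f_def by (intro SUP_cong) simp_all
  with lim have "(\<lambda>n. supnorm a b (fadd (F n) (fscale (-1) f))) \<longlonglongrightarrow> 0"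
    by (simp add: supnorm_diff[OF Fn f])
  with f show ?thesis by blast
qed

theorem theorem3p9:
  fixes a b :: real
  assumes "a < b"
  defines "C \<equiv> Cfun a b" and "N \<equiv> supnorm a b"
  shows
    \<comment> \<open>closure under the pointwise operations\<close>
    "(\<forall>f\<in>C. \<forall>g\<in>C. fadd f g \<in> C) \<and> (\<forall>k. \<forall>f\<in>C. fscale k f \<in> C) \<and> fzero \<in> C
    \<comment> \<open>real vector space axioms\<close>
     \<and> (\<forall>f\<in>C. \<forall>g\<in>C. \<forall>h\<in>C. fadd (fadd f g) h = fadd f (fadd g h))
     \<and> (\<forall>f\<in>C. \<forall>g\<in>C. fadd f g = fadd g f)
     \<and> (\<forall>f\<in>C. fadd f fzero = f)
     \<and> (\<forall>f\<in>C. \<exists>g\<in>C. fadd f g = fzero)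
     \<and> (\<forall>k. \<forall>f\<in>C. \<forall>g\<in>C. fscale k (fadd f g) = fadd (fscale k f) (fscale k g))
     \<and> (\<forall>k l. \<forall>f\<in>C. fscale (k + l) f = fadd (fscale k f) (fscale l f))
     \<and> (\<forall>k l. \<forall>f\<in>C. fscale k (fscale l f) = fscale (k * l) f)
     \<and> (\<forall>f\<in>C. fscale 1 f = f)
    \<comment> \<open>the sup norm is a norm\<close>
     \<and> (\<forall>f\<in>C. 0 \<le> N f)
     \<and> (\<forall>f\<in>C. N f = 0 \<longleftrightarrow> f = fzero)
     \<and> (\<forall>k. \<forall>f\<in>C. N (fscale k f) = \<bar>k\<bar> * N f)
     \<and> (\<forall>f\<in>C. \<forall>g\<in>C. N (fadd f g) \<le> N f + N g)
    \<comment> \<open>completeness w.r.t. the norm-induced metric\<close>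
     \<and> (\<forall>F. (\<forall>n. F n \<in> C) \<longrightarrow>
           (\<forall>e>0. \<exists>M. \<forall>m\<ge>M. \<forall>n\<ge>M. N (fadd (F m) (fscale (-1) (F n))) < e) \<longrightarrow>
           (\<exists>f\<in>C. (\<lambda>n. N (fadd (F n) (fscale (-1) f))) \<longlonglongrightarrow> 0))"
proof -
  have ab: "a \<le> b" using \<open>a < b\<close> by simp
  have inverse: "\<exists>g\<in>Cfun a b. fadd f g = fzero" if "f \<in> Cfun a b" for f
    using that by (intro bexI[of _ "fscale (-1) f"] fadd_fscale_minus_one fscale_in_Cfun)
  show ?thesis
    unfolding C_def N_def
    by (intro conjI ballI allI impI fadd_commute)
      (simp_all add: fadd_in_Cfun fscale_in_Cfun fzero_in_Cfun fadd_assoc fadd_fzero inverse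
        fscale_fadd fscale_add fscale_fscale fscale_one supnorm_nonneg[OF ab] supnorm_eq_0_iff[OF ab]
        supnorm_fscale[OF ab] supnorm_fadd_le[OF ab] Cfun_complete[OF ab])
qed

end
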